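(* For $t>0$ the following are equivalent: (i) $K^t\mathbb H\subset\mathbb H$; (ii) $K^t_{\mathbb H}$ is a bounded operator defined on all of $\mathbb H$, i.e. $K^t_{\mathbb H}\in L(\mathbb H)$; (iii) $\operatorname{ran}C^t_{\mathbb H}\subset\operatorname{ran}C_{\mathbb H}$.
   Context: Let $\mathcal X\subset\mathbb R^d$ and consider the SDE $dX_t=b(X_t)\,dt+\sigma(X_t)\,dW_t$ ($W_t$ $d$-dimensional Brownian motion, $b,\sigma$ Lipschitz with $(1+\|x\|_2)^{-1}(\|b(x)\|_2+\|\sigma(x)\|_F)$ bounded), with transition kernel $\rho_t$ and invariant Borel probability measure $\mu$. Koopman operator $(K^t\psi)(x)=\int\psi(y)\rho_t(x,dy)$, a contraction on $L^2_\mu(\mathcal X)$. Let $k$ be a continuous symmetric positive definite kernel with RKHS $\mathbb H$, $\Phi(x)=k(x,\cdot)$, $\varphi(x)=k(x,x)$, satisfying (A1) $\varphi\in L^2_\mu$; (A2) $\psi\in L^2_\mu$ with $\iint k(x,y)\psi(x)\psi(y)d\mu d\mu=0$ implies $\psi=0$; (A3) $\psi\in\mathbb H$ with $\psi=0$ $\mu$-a.e. implies $\psi\equiv0$; so $\mathbb H\subset L^2_\mu$. Let $\mathcal E\psi=\int\psi\Phi\,d\mu$, $\mathcal E^*$ the inclusion $\mathbb H\hookrightarrow L^2_\mu$, $C_{\mathbb H}=\mathcal E\mathcal E^*$ (injective), $C^t_{\mathbb H}=\mathcal EK^t\mathcal E^*$. The operator $K^t_{\mathbb H}:=C_{\mathbb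 H}^{-1}C^t_{\mathbb H}$ is defined in $\mathbb H$ on the domain $\{\psi\in\mathbb H:C^t_{\mathbb H}\psi\in\operatorname{ran}C_{\mathbb H}\}$. $L(\mathbb H)$ denotes the bounded linear operators on $\mathbb H$. *)

theory Defs
  imports "HOL-Analysis.Analysis" "HOL-Probability.Probability"
begin

definition feat :: "'a set \<Rightarrow> ('a \<Rightarrow> 'a \<Rightarrow> real) \<Rightarrow> 'a \<Rightarrow> ('a \<Rightarrow> real)" where
  "feat X k x = (\<lambda>y. if y \<in> X then k x y else 0)"

definition pd_kernel :: "'a set \<Rightarrow> ('a \<Rightarrow> 'a \<Rightarrow> real) \<Rightarrow> bool" where
  "pd_kernel X k \<longleftrightarrow> (\<forall>x\<in>X. \<forall>y\<in>X. k x y = k y x) \<and>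
     (\<forall>(n::nat) (xs::nat \<Rightarrow> 'a) (a::nat \<Rightarrow> real). (\<forall>i<n. xs i \<in> X) \<longrightarrow>
        0 \<le> (\<Sum>i<n. \<Sum>j<n. a i * a j * k (xs i) (xs j)))"

definition hnorm :: "(('a \<Rightarrow> real) \<Rightarrow> ('a \<Rightarrow> real) \<Rightarrow> real) \<Rightarrow> ('a \<Rightarrow> real) \<Rightarrow> real" where
  "hnorm ip f = sqrt (ip f f)"

definition is_rkhs :: "'a set \<Rightarrow> ('a \<Rightarrow> 'a \<Rightarrow> real) \<Rightarrow> ('a \<Rightarrow> real) set
     \<Rightarrow> (('a \<Rightarrow> real) \<Rightarrow> ('a \<Rightarrow> real) \<Rightarrow> real) \<Rightarrow> bool" where
  "is_rkhs X k H ip \<longleftrightarrow>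
     (\<forall>f\<in>H. \<forall>x. x \<notin> X \<longrightarrow> f x = 0) \<and>
     (\<lambda>x. 0) \<in> H \<and> (\<forall>f\<in>H. \<forall>g\<in>H. (\<lambda>x. f x + g x) \<in> H) \<and> (\<forall>c. \<forall>f\<in>H. (\<lambda>x. c * f x) \<in> H) \<and>
     (\<forall>f\<in>H. \<forall>g\<in>H. ip f g = ip g f) \<and>
     (\<forall>f\<in>H. \<forall>g\<in>H. \<forall>h\<in>H. ip (\<lambda>x. f x + g x) h = ip f h + ip g h) \<and>
     (\<forall>c. \<forall>f\<in>H. \<forall>g\<in>H. ip (\<lambda>x. c * f x) g = c * ip f g) \<and>
     (\<forall>f\<in>H. 0 \<le> ip f f \<and> (ip f f = 0 \<longrightarrow> f = (\<lambda>x. 0))) \<and>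
     (\<forall>s::nat \<Rightarrow> ('a \<Rightarrow> real). (\<forall>n. s n \<in> H) \<longrightarrow>
        (\<forall>e>0. \<exists>N. \<forall>m\<ge>N. \<forall>n\<ge>N. hnorm ip (\<lambda>x. s m x - s n x) < e) \<longrightarrow>
        (\<exists>f\<in>H. (\<lambda>n. hnorm ip (\<lambda>x. s n x - f x)) \<longlonglongrightarrow> 0)) \<and>
     (\<forall>x\<in>X. feat X k x \<in> H) \<and>
     (\<forall>x\<in>X. \<forall>f\<in>H. ip f (feat X k x) = f x)"

text \<open>Square-integrable functions w.r.t. mu (representatives of L^2_mu).\<close>
definition L2 :: "'a measure \<Rightarrow> ('a \<Rightarrow> real) set" where
  "L2 M = {f \<in> borel_measurable M. integrable M (\<lambda>x. (f x)\<^sup>2)}"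

definition koopman :: "('a \<Rightarrow> 'a measure) \<Rightarrow> ('a \<Rightarrow> real) \<Rightarrow> ('a \<Rightarrow> real)" where
  "koopman \<rho> \<psi> = (\<lambda>x. \<integral>y. \<psi> y \<partial>(\<rho> x))"

text \<open>The operator E psi = int psi Phi dmu, written pointwise:
  (E psi)(x) = <E psi, Phi(x)>_H = int psi(y) k(y,x) dmu(y) for x in X.\<close>
definition Eop :: "'a measure \<Rightarrow> ('a \<Rightarrow> 'a \<Rightarrow> real) \<Rightarrow> ('a \<Rightarrow> real) \<Rightarrow> ('a \<Rightarrow> real)" where
  "Eop M k \<psi> = (\<lambda>x. if x \<in> space M then \<integral>y. \<psi> y * k y x \<partial>M else 0)"

text \<open>C_H = E E^* (E^* the inclusion H into L^2_mu) and C^t_H = E K^t E^*, restricted to H.\<close>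
definition CH :: "'a measure \<Rightarrow> ('a \<Rightarrow> 'a \<Rightarrow> real) \<Rightarrow> ('a \<Rightarrow> real) \<Rightarrow> ('a \<Rightarrow> real)" where
  "CH M k \<psi> = Eop M k \<psi>"

definition CHt :: "'a measure \<Rightarrow> ('a \<Rightarrow> 'a \<Rightarrow> real) \<Rightarrow> ('a \<Rightarrow> 'a measure) \<Rightarrow> ('a \<Rightarrow> real) \<Rightarrow> ('a \<Rightarrow> real)" where
  "CHt M k \<rho> \<psi> = Eop M k (koopman \<rho> \<psi>)"

definition KH_dom :: "'a measure \<Rightarrow> ('a \<Rightarrow> 'a \<Rightarrow> real) \<Rightarrow> ('a \<Rightarrow> real) set \<Rightarrow> ('a \<Rightarrow> 'a measure) \<Rightarrow> ('a \<Rightarrow> real) set" where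
  "KH_dom M k H \<rho> = {\<psi> \<in> H. CHt M k \<rho> \<psi> \<in> CH M k ` H}"

definition KH :: "'a measure \<Rightarrow> ('a \<Rightarrow> 'a \<Rightarrow> real) \<Rightarrow> ('a \<Rightarrow> real) set \<Rightarrow> ('a \<Rightarrow> 'a measure) \<Rightarrow> ('a \<Rightarrow> real) \<Rightarrow> ('a \<Rightarrow> real)" where
  "KH M k H \<rho> \<psi> = (THE \<phi>. \<phi> \<in> H \<and> CH M k \<phi> = CHt M k \<rho> \<psi>)"

end

theory Submission
  imports Defs
begin

text \<open>
  By the reproducing property every f \<in> H is continuous and satisfies
  \<bar>f x\<bar> \<le> \<parallel>f\<parallel> sqrt (k x x), so H \<subseteq> L^2(\<mu>); with the invariance of \<mu> the same
  bound, integrated against the transition kernel, shows K^t f \<in> L^2(\<mu>). Since E is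
  injective on L^2(\<mu>) (A2), C_H \<phi> = C^t_H \<psi> holds exactly when \<phi> = K^t \<psi> \<mu>-a.e.;
  this gives (i) \<longleftrightarrow> (iii), and by (A3) it identifies K^t_H \<psi> with the unique element of H
  equal to K^t \<psi> a.e. Boundedness in (ii) is a Baire category argument: the sublevel sets
  {\<psi>. \<parallel>K^t_H \<psi>\<parallel> \<le> n} cover H and are closed, because a norm-bounded sequence of H
  converging pointwise a.e. has a limit in H of no larger norm; that limit is built from
  elements of nearly minimal norm in nested convex sets, which converge by the
  parallelogram law.
\<close>

locale rkhs_space =
  fixes X :: "'a set" and k :: "'a \<Rightarrow> 'a \<Rightarrow> real" and H :: "('a \<Rightarrow> real) set"
    and ip :: "('a \<Rightarrow> real) \<Rightarrow> ('a \<Rightarrow> real) \<Rightarrow> real"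
  assumes rkhs: "is_rkhs X k H ip"
begin

lemma H_vanishes_outside: "f \<in> H \<Longrightarrow> x \<notin> X \<Longrightarrow> f x = 0"
  using rkhs unfolding is_rkhs_def by blast

lemma zero_in_H [simp]: "(\<lambda>x. 0) \<in> H"
  using rkhs unfolding is_rkhs_def by blast

lemma add_in_H: "f \<in> H \<Longrightarrow> g \<in> H \<Longrightarrow> (\<lambda>x. f x + g x) \<in> H"
  using rkhs unfolding is_rkhs_def by blast

lemma scale_in_H: "f \<in> H \<Longrightarrow> (\<lambda>x. c * f x) \<in> H"
  using rkhs unfolding is_rkhs_def by blast

lemma ip_commute: "f \<in> H \<Longrightarrow> g \<in> H \<Longrightarrow> ip f g = ip g f"
  using rkhs unfolding is_rkhs_def by blast

lemma ip_add_left: "f \<in> H \<Longrightarrow> g \<in> H \<Longrightarrow> h \<in> H \<Longrightarrow> ip (\<lambda>x. f x + g x) h = ip f h + ip g h"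
  using rkhs unfolding is_rkhs_def by blast

lemma ip_scale_left: "f \<in> H \<Longrightarrow> g \<in> H \<Longrightarrow> ip (\<lambda>x. c * f x) g = c * ip f g"
  using rkhs unfolding is_rkhs_def by blast

lemma ip_self_nonneg: "f \<in> H \<Longrightarrow> 0 \<le> ip f f"
  using rkhs unfolding is_rkhs_def by blast

lemma ip_self_eq_0D: "f \<in> H \<Longrightarrow> ip f f = 0 \<Longrightarrow> f = (\<lambda>x. 0)"
  using rkhs unfolding is_rkhs_def by blast

lemma H_Cauchy_convergent:
  "(\<And>n. s n \<in> H) \<Longrightarrow> \<forall>e>0. \<exists>N. \<forall>m\<ge>N. \<forall>n\<ge>N. hnorm ip (\<lambda>x. s m x - s n x) < e \<Longrightarrow>
    \<exists>f\<in>H. (\<lambda>n. hnorm ip (\<lambda>x. s n x - f x)) \<longlonglongrightarrow> 0"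
  using rkhs unfolding is_rkhs_def by blast

lemma feat_in_H: "x \<in> X \<Longrightarrow> feat X k x \<in> H"
  using rkhs unfolding is_rkhs_def by blast

lemma ip_feat: "x \<in> X \<Longrightarrow> f \<in> H \<Longrightarrow> ip f (feat X k x) = f x"
  using rkhs unfolding is_rkhs_def by blast

lemma lincomb_in_H: "f \<in> H \<Longrightarrow> g \<in> H \<Longrightarrow> (\<lambda>x. a * f x + b * g x) \<in> H"
  by (intro add_in_H scale_in_H)

lemma diff_in_H: "f \<in> H \<Longrightarrow> g \<in> H \<Longrightarrow> (\<lambda>x. f x - g x) \<in> H"
  using lincomb_in_H[of f g 1 "-1"] by simp

lemma ip_lincomb_left: "f \<in> H \<Longrightarrow> g \<in> H \<Longrightarrow> h \<in> H \<Longrightarrow>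
    ip (\<lambda>x. a * f x + b * g x) h = a * ip f h + b * ip g h"
  by (simp add: ip_add_left scale_in_H ip_scale_left)

lemma ip_lincomb_right: "f \<in> H \<Longrightarrow> g \<in> H \<Longrightarrow> h \<in> H \<Longrightarrow>
    ip h (\<lambda>x. a * f x + b * g x) = a * ip h f + b * ip h g"
  by (simp add: ip_commute[of h] lincomb_in_H ip_lincomb_left)

lemma ip_diff_right: "f \<in> H \<Longrightarrow> g \<in> H \<Longrightarrow> h \<in> H \<Longrightarrow> ip h (\<lambda>x. f x - g x) = ip h f - ip h g"
  using ip_lincomb_right[of f g h 1 "-1"] by simp

lemma ip_zero_right [simp]: "f \<in> H \<Longrightarrow> ip f (\<lambda>x. 0) = 0"
  using ip_scale_left[of "\<lambda>x. 0" f 0] ip_commute[of f "\<lambda>x. 0"] by simp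

lemma ip_lincomb_self:
  assumes "f \<in> H" "g \<in> H"
  shows "ip (\<lambda>x. a * f x + b * g x) (\<lambda>x. a * f x + b * g x) = a\<^sup>2 * ip f f + 2 * a * b * ip f g + b\<^sup>2 * ip g g"
  using assms by (simp add: ip_lincomb_left ip_lincomb_right lincomb_in_H ip_commute[of g f]
      power2_eq_square algebra_simps)

lemma ip_parallelogram:
  assumes "f \<in> H" "g \<in> H"
  shows "ip (\<lambda>x. f x - g x) (\<lambda>x. f x - g x)
    = 2 * ip f f + 2 * ip g g - 4 * ip (\<lambda>x. (1/2) * f x + (1/2) * g x) (\<lambda>x. (1/2) * f x + (1/2) * g x)"
  using ip_lincomb_self[OF assms, of 1 "-1"] ip_lincomb_self[OF assms, of "1/2" "1/2"]
  by (simp add: power2_eq_square)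

lemma ip_Cauchy_Schwarz:
  assumes "f \<in> H" "g \<in> H"
  shows "(ip f g)\<^sup>2 \<le> ip f f * ip g g"
proof (cases "ip g g = 0")
  case True
  then show ?thesis using assms ip_self_eq_0D by force
next
  case False
  then have g_pos: "ip g g > 0" using ip_self_nonneg[OF assms(2)] by linarith
  define c where "c = - ip f g / ip g g"
  have "0 \<le> ip (\<lambda>x. 1 * f x + c * g x) (\<lambda>x. 1 * f x + c * g x)"
    using ip_self_nonneg lincomb_in_H assms by blast
  also have "\<dots> = ip f f + 2 * c * ip f g + c\<^sup>2 * ip g g"
    using ip_lincomb_self[OF assms, of 1 c] by simp
  also have "\<dots> = ip f f - (ip f g)\<^sup>2 / ip g g"
    using g_pos by (simp add: c_def field_simps power2_eq_square)
  finally show ?thesis using g_pos by (simp add: field_simps)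
qed

lemma hnorm_sq: "f \<in> H \<Longrightarrow> (hnorm ip f)\<^sup>2 = ip f f"
  by (simp add: hnorm_def ip_self_nonneg)

lemma hnorm_nonneg: "f \<in> H \<Longrightarrow> 0 \<le> hnorm ip f"
  by (simp add: hnorm_def ip_self_nonneg)

lemma hnorm_zero [simp]: "hnorm ip (\<lambda>x. 0) = 0"
  by (simp add: hnorm_def)

lemma hnorm_eq_0D: "f \<in> H \<Longrightarrow> hnorm ip f = 0 \<Longrightarrow> f = (\<lambda>x. 0)"
  by (simp add: hnorm_def ip_self_eq_0D)

lemma abs_ip_le_hnorm:
  assumes "f \<in> H" "g \<in> H"
  shows "\<bar>ip f g\<bar> \<le> hnorm ip f * hnorm ip g"
proof -
  have "\<bar>ip f g\<bar>\<^sup>2 \<le> (hnorm ip f * hnorm ip g)\<^sup>2"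
    using ip_Cauchy_Schwarz[OF assms] by (simp add: power_mult_distrib hnorm_sq assms)
  then show ?thesis
    using assms by (meson power2_le_imp_le mult_nonneg_nonneg hnorm_nonneg)
qed

lemma hnorm_scale:
  assumes "f \<in> H"
  shows "hnorm ip (\<lambda>x. c * f x) = \<bar>c\<bar> * hnorm ip f"
proof -
  have "ip (\<lambda>x. c * f x) (\<lambda>x. c * f x) = c\<^sup>2 * ip f f"
    using ip_lincomb_self[OF assms zero_in_H, of c 0] by simp
  then show ?thesis by (simp add: hnorm_def real_sqrt_mult)
qed

lemma hnorm_lincomb_le:
  assumes "f \<in> H" "g \<in> H"
  shows "hnorm ip (\<lambda>x. a * f x + b * g x) \<le> \<bar>a\<bar> * hnorm ip f + \<bar>b\<bar> * hnorm ip g"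
proof -
  have "a * b * ip f g \<le> \<bar>a\<bar> * \<bar>b\<bar> * \<bar>ip f g\<bar>"
    by (metis abs_ge_self abs_mult)
  also have "\<dots> \<le> \<bar>a\<bar> * \<bar>b\<bar> * (hnorm ip f * hnorm ip g)"
    by (intro mult_left_mono abs_ip_le_hnorm assms) simp
  finally have cross: "a * b * ip f g \<le> \<bar>a\<bar> * \<bar>b\<bar> * (hnorm ip f * hnorm ip g)" .
  have "(hnorm ip (\<lambda>x. a * f x + b * g x))\<^sup>2
      = a\<^sup>2 * (hnorm ip f)\<^sup>2 + 2 * a * b * ip f g + b\<^sup>2 * (hnorm ip g)\<^sup>2"
    using assms by (simp add: hnorm_sq lincomb_in_H ip_lincomb_self)
  also have "\<dots> \<le> (\<bar>a\<bar> * hnorm ip f + \<bar>b\<bar> * hnorm ip g)\<^sup>2"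
    using cross by (simp add: power2_sum power_mult_distrib mult_ac)
  finally show ?thesis
    using assms by (meson abs_ge_zero add_nonneg_nonneg mult_nonneg_nonneg power2_le_imp_le hnorm_nonneg)
qed

lemma hnorm_diff_commute: "f \<in> H \<Longrightarrow> g \<in> H \<Longrightarrow> hnorm ip (\<lambda>x. f x - g x) = hnorm ip (\<lambda>x. g x - f x)"
  using hnorm_scale[of "\<lambda>x. g x - f x" "-1"] diff_in_H by simp

lemma hnorm_diff_triangle:
  assumes "f \<in> H" "g \<in> H" "h \<in> H"
  shows "hnorm ip (\<lambda>x. f x - h x) \<le> hnorm ip (\<lambda>x. f x - g x) + hnorm ip (\<lambda>x. g x - h x)"
  using hnorm_lincomb_le[of "\<lambda>x. f x - g x" "\<lambda>x. g x - h x" 1 1] assms diff_in_H by simp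

lemma ip_feat_feat: "x \<in> X \<Longrightarrow> y \<in> X \<Longrightarrow> ip (feat X k x) (feat X k y) = k x y"
  using ip_feat[OF _ feat_in_H, of y x] by (simp add: feat_def)

lemma k_commute: "x \<in> X \<Longrightarrow> y \<in> X \<Longrightarrow> k x y = k y x"
  by (metis ip_feat_feat ip_commute feat_in_H)

lemma k_diag_nonneg: "x \<in> X \<Longrightarrow> 0 \<le> k x x"
  by (metis ip_feat_feat ip_self_nonneg feat_in_H)

lemma hnorm_feat: "x \<in> X \<Longrightarrow> hnorm ip (feat X k x) = sqrt (k x x)"
  by (simp add: hnorm_def ip_feat_feat)

lemma abs_k_le: "x \<in> X \<Longrightarrow> y \<in> X \<Longrightarrow> \<bar>k x y\<bar> \<le> sqrt (k x x) * sqrt (k y y)"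
  using abs_ip_le_hnorm[OF feat_in_H feat_in_H, of x y] by (simp add: ip_feat_feat hnorm_feat)

lemma abs_le_hnorm_sqrt_diag: "f \<in> H \<Longrightarrow> x \<in> X \<Longrightarrow> \<bar>f x\<bar> \<le> hnorm ip f * sqrt (k x x)"
  using abs_ip_le_hnorm[OF _ feat_in_H, of f x] by (simp add: ip_feat hnorm_feat)

lemma sq_le_hnorm_sq_diag:
  assumes "f \<in> H" "x \<in> X"
  shows "(f x)\<^sup>2 \<le> (hnorm ip f)\<^sup>2 * k x x"
proof -
  have "\<bar>f x\<bar>\<^sup>2 \<le> (hnorm ip f * sqrt (k x x))\<^sup>2"
    by (rule power_mono[OF abs_le_hnorm_sqrt_diag[OF assms]]) simp
  then show ?thesis using k_diag_nonneg[OF assms(2)] by (simp add: power_mult_distrib)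
qed

lemma hnorm_feat_diff_sq:
  assumes "x \<in> X" "y \<in> X"
  shows "(hnorm ip (\<lambda>z. feat X k y z - feat X k x z))\<^sup>2 = k y y - 2 * k x y + k x x"
proof -
  have "ip (\<lambda>z. 1 * feat X k y z + (-1) * feat X k x z) (\<lambda>z. 1 * feat X k y z + (-1) * feat X k x z)
      = k y y - 2 * k y x + k x x"
    using ip_lincomb_self[OF feat_in_H[OF assms(2)] feat_in_H[OF assms(1)], of 1 "-1"] assms
    by (simp add: ip_feat_feat)
  then show ?thesis
    using assms by (simp add: hnorm_sq diff_in_H feat_in_H k_commute[of x y])
qed

lemma H_convergence_imp_pointwise:
  assumes "\<And>m. s m \<in> H" "g \<in> H" "(\<lambda>m. hnorm ip (\<lambda>x. s m x - g x)) \<longlonglongrightarrow> 0"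
  shows "(\<lambda>m. s m y) \<longlonglongrightarrow> g y"
proof (cases "y \<in> X")
  case True
  have "eventually (\<lambda>m. norm (s m y - g y) \<le> hnorm ip (\<lambda>x. s m x - g x) * sqrt (k y y)) sequentially"
    using abs_le_hnorm_sqrt_diag[OF diff_in_H[OF assms(1,2)] True] by simp
  from Lim_null_comparison[OF this tendsto_mult_left_zero[OF assms(3)]]
  show ?thesis by (simp add: LIM_zero_iff)
next
  case False
  then have "s m y = 0" "g y = 0" for m
    using H_vanishes_outside assms(1,2) by blast+
  then show ?thesis by simp
qed

definition H_dist :: "('a \<Rightarrow> real) \<Rightarrow> ('a \<Rightarrow> real) \<Rightarrow> real" where
  "H_dist f g = (if f \<in> H \<and> g \<in> H then hnorm ip (\<lambda>x. f x - g x) else 0)"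

lemma Metric_space_H: "Metric_space H H_dist"
proof
  show "0 \<le> H_dist f g" for f g
    unfolding H_dist_def using hnorm_nonneg diff_in_H by auto
  show "H_dist f g = H_dist g f" for f g
    unfolding H_dist_def using hnorm_diff_commute[of f g] by auto
  show "H_dist f g = 0 \<longleftrightarrow> f = g" if "f \<in> H" "g \<in> H" for f g
  proof
    assume "H_dist f g = 0"
    then have "(\<lambda>x. f x - g x) = (\<lambda>x. 0)"
      using that hnorm_eq_0D diff_in_H unfolding H_dist_def by auto
    then show "f = g" by (simp add: fun_eq_iff)
  qed (simp add: H_dist_def)
  show "H_dist f h \<le> H_dist f g + H_dist g h" if "f \<in> H" "g \<in> H" "h \<in> H" for f g h
    unfolding H_dist_def using that hnorm_diff_triangle by auto
qed

interpretation H_metric: Metric_space H H_dist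
  by (rule Metric_space_H)

lemma H_limitin_iff:
  assumes "range \<sigma> \<subseteq> H" "l \<in> H"
  shows "limitin H_metric.mtopology \<sigma> l sequentially \<longleftrightarrow> (\<lambda>m. hnorm ip (\<lambda>x. \<sigma> m x - l x)) \<longlonglongrightarrow> 0"
proof -
  have "\<sigma> m \<in> H" for m using assms by auto
  then show ?thesis
    using assms hnorm_nonneg[OF diff_in_H]
    by (simp add: H_metric.limitin_metric H_dist_def tendsto_iff dist_real_def)
qed

lemma H_mcomplete: "H_metric.mcomplete"
  unfolding H_metric.mcomplete_def
proof (intro allI impI)
  fix \<sigma> assume Cauchy: "H_metric.MCauchy \<sigma>"
  then have \<sigma>_H: "range \<sigma> \<subseteq> H" unfolding H_metric.MCauchy_def by auto
  then have "H_dist (\<sigma> m) (\<sigma> n) = hnorm ip (\<lambda>x. \<sigma> m x - \<sigma> n x)" for m n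
    by (auto simp: H_dist_def)
  then have "\<forall>e>0. \<exists>N. \<forall>m\<ge>N. \<forall>n\<ge>N. hnorm ip (\<lambda>x. \<sigma> m x - \<sigma> n x) < e"
    using Cauchy unfolding H_metric.MCauchy_def by simp
  then obtain f where "f \<in> H" "(\<lambda>n. hnorm ip (\<lambda>x. \<sigma> n x - f x)) \<longlonglongrightarrow> 0"
    using H_Cauchy_convergent \<sigma>_H by blast
  then show "\<exists>f. limitin H_metric.mtopology \<sigma> f sequentially"
    using H_limitin_iff[OF \<sigma>_H] by blast
qed

text \<open>The closed sublevel sets cover H, so by Baire category one of them has interior.\<close>
lemma bounded_on_ball_if_closed_sublevels:
  fixes p :: "('a \<Rightarrow> real) \<Rightarrow> real"
  assumes closed_sublevels: "\<And>n \<sigma> l. (\<And>m. \<sigma> m \<in> H) \<Longrightarrow> (\<And>m. p (\<sigma> m) \<le> n) \<Longrightarrow> l \<in> H \<Longrightarrow>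
      (\<lambda>m. hnorm ip (\<lambda>x. \<sigma> m x - l x)) \<longlonglongrightarrow> 0 \<Longrightarrow> p l \<le> n"
  obtains n \<psi>\<^sub>0 r where "\<psi>\<^sub>0 \<in> H" "r > 0"
    "\<And>\<psi>. \<psi> \<in> H \<Longrightarrow> hnorm ip (\<lambda>x. \<psi>\<^sub>0 x - \<psi> x) < r \<Longrightarrow> p \<psi> \<le> n"
proof -
  define F where "F n = {\<psi> \<in> H. p \<psi> \<le> real n}" for n :: nat
  have closed: "closedin H_metric.mtopology (F n)" for n
    unfolding H_metric.metric_closedin_iff_sequentially_closed
  proof (intro conjI allI impI)
    show "F n \<subseteq> H" unfolding F_def by auto
    fix \<sigma> l assume lim: "range \<sigma> \<subseteq> F n \<and> limitin H_metric.mtopology \<sigma> l sequentially"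
    then have \<sigma>_H: "range \<sigma> \<subseteq> H" and l: "l \<in> H"
      unfolding F_def using H_metric.limitin_mspace by auto
    have "p l \<le> real n"
      by (rule closed_sublevels[of \<sigma>]) (use lim \<sigma>_H l H_limitin_iff in \<open>auto simp: F_def image_subset_iff\<close>)
    then show "l \<in> F n" using l unfolding F_def by simp
  qed
  have cover: "\<Union> (range F) = H"
  proof
    show "H \<subseteq> \<Union> (range F)"
      unfolding F_def using real_nat_ceiling_ge by blast
  qed (auto simp: F_def)
  have "\<exists>n. H_metric.mtopology interior_of F n \<noteq> {}"
  proof (rule ccontr)
    assume "\<nexists>n. H_metric.mtopology interior_of F n \<noteq> {}"
    then have "H_metric.mtopology interior_of H = {}"
      using H_metric.metric_Baire_category_alt[OF H_mcomplete, of "range F"] closed cover by auto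
    moreover have "H_metric.mtopology interior_of H = H"
      by (metis H_metric.topspace_mtopology interior_of_topspace)
    ultimately show False using zero_in_H by blast
  qed
  then obtain n \<psi>\<^sub>0 where \<psi>\<^sub>0: "\<psi>\<^sub>0 \<in> H_metric.mtopology interior_of F n" by blast
  have "openin H_metric.mtopology (H_metric.mtopology interior_of F n)" by simp
  with \<psi>\<^sub>0 obtain r where "r > 0" "H_metric.mball \<psi>\<^sub>0 r \<subseteq> H_metric.mtopology interior_of F n"
    unfolding H_metric.openin_mtopology by blast
  moreover have interior_F: "H_metric.mtopology interior_of F n \<subseteq> F n"
    by (rule interior_of_subset)
  ultimately have ball: "H_metric.mball \<psi>\<^sub>0 r \<subseteq> F n" by blast
  have \<psi>\<^sub>0_H: "\<psi>\<^sub>0 \<in> H" using \<psi>\<^sub>0 interior_F unfolding F_def by blast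
  show thesis
  proof (rule that[OF \<psi>\<^sub>0_H \<open>r > 0\<close>])
    fix \<psi> assume "\<psi> \<in> H" "hnorm ip (\<lambda>x. \<psi>\<^sub>0 x - \<psi> x) < r"
    then have "\<psi> \<in> H_metric.mball \<psi>\<^sub>0 r" using \<psi>\<^sub>0_H by (simp add: H_dist_def)
    then show "p \<psi> \<le> real n" using ball unfolding F_def by blast
  qed
qed

lemma linear_bounded_if_bounded_on_ball:
  assumes T_H: "\<And>\<psi>. \<psi> \<in> H \<Longrightarrow> T \<psi> \<in> H"
    and T_lincomb: "\<And>f g a b. f \<in> H \<Longrightarrow> g \<in> H \<Longrightarrow>
      T (\<lambda>x. a * f x + b * g x) = (\<lambda>x. a * T f x + b * T g x)"
    and ball: "\<psi>\<^sub>0 \<in> H" "r > 0"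
      "\<And>\<psi>. \<psi> \<in> H \<Longrightarrow> hnorm ip (\<lambda>x. \<psi>\<^sub>0 x - \<psi> x) < r \<Longrightarrow> hnorm ip (T \<psi>) \<le> n"
  shows "\<exists>B. \<forall>\<psi>\<in>H. hnorm ip (T \<psi>) \<le> B * hnorm ip \<psi>"
proof (intro exI ballI)
  fix h assume h: "h \<in> H"
  show "hnorm ip (T h) \<le> 4 * n / r * hnorm ip h"
  proof (cases "hnorm ip h = 0")
    case True
    then have "h = (\<lambda>x. 0)" using hnorm_eq_0D h by blast
    moreover have "T (\<lambda>x. 0) = (\<lambda>x. 0)"
      using T_lincomb[OF zero_in_H zero_in_H, of 0 0] by simp
    ultimately show ?thesis by simp
  next
    case False
    then have h_pos: "hnorm ip h > 0" using hnorm_nonneg[OF h] by linarith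
    define c where "c = r / (2 * hnorm ip h)"
    have c_pos: "c > 0" using h_pos ball(2) by (simp add: c_def)
    define \<psi> where "\<psi> = (\<lambda>x. 1 * \<psi>\<^sub>0 x + c * h x)"
    have \<psi>_H: "\<psi> \<in> H" unfolding \<psi>_def using lincomb_in_H ball(1) h by blast
    have "hnorm ip (\<lambda>x. \<psi>\<^sub>0 x - \<psi> x) = hnorm ip (\<lambda>x. (- c) * h x)"
      unfolding \<psi>_def by simp
    also have "\<dots> = r / 2" using hnorm_scale[OF h, of "-c"] c_pos h_pos ball(2) by (simp add: c_def)
    finally have "hnorm ip (T \<psi>) \<le> n" using ball \<psi>_H by simp
    moreover have "hnorm ip (T \<psi>\<^sub>0) \<le> n" using ball by simp
    moreover have "(\<lambda>x. c * T h x) = (\<lambda>x. 1 * T \<psi> x + (-1) * T \<psi>\<^sub>0 x)"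
      using T_lincomb[OF ball(1) h, of 1 c] unfolding \<psi>_def by auto
    then have "c * hnorm ip (T h) \<le> hnorm ip (T \<psi>) + hnorm ip (T \<psi>\<^sub>0)"
      using hnorm_lincomb_le[OF T_H T_H, of \<psi> \<psi>\<^sub>0 1 "-1"] hnorm_scale[OF T_H[OF h], of c]
        \<psi>_H ball(1) c_pos by simp
    ultimately have "hnorm ip (T h) \<le> 2 * n / c" using c_pos by (simp add: field_simps)
    also have "\<dots> = 4 * n / r * hnorm ip h" using h_pos ball(2) by (simp add: c_def field_simps)
    finally show ?thesis .
  qed
qed

lemma H_Cauchy_if_sq_dist_le:
  assumes s_H: "\<And>m. s m \<in> H" and b: "b \<longlonglongrightarrow> 0"
    and dist_le: "\<And>m l. m \<le> l \<Longrightarrow> ip (\<lambda>x. s m x - s l x) (\<lambda>x. s m x - s l x) \<le> b m"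
  shows "\<forall>e>0. \<exists>N. \<forall>m\<ge>N. \<forall>l\<ge>N. hnorm ip (\<lambda>x. s m x - s l x) < e"
proof (intro allI impI)
  fix e :: real assume "e > 0"
  then obtain N where N: "\<And>m. m \<ge> N \<Longrightarrow> b m < e\<^sup>2"
    using order_tendstoD(2)[OF b, of "e\<^sup>2"] by (auto simp: eventually_sequentially)
  have less: "hnorm ip (\<lambda>x. s m x - s l x) < e" if "N \<le> m" "m \<le> l" for m l
    unfolding hnorm_def using dist_le[OF that(2)] N[OF that(1)] \<open>e > 0\<close>
    by (intro real_less_lsqrt) auto
  show "\<exists>N. \<forall>m\<ge>N. \<forall>l\<ge>N. hnorm ip (\<lambda>x. s m x - s l x) < e"
  proof (intro exI allI impI)
    fix m l assume "N \<le> m" "N \<le> l"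
    then show "hnorm ip (\<lambda>x. s m x - s l x) < e"
      using less[of m l] less[of l m] hnorm_diff_commute[OF s_H s_H, of m l] by (cases "m \<le> l") auto
  qed
qed

text \<open>Elements of nearly minimal norm in a decreasing sequence of convex sets form a Cauchy
  sequence, by the parallelogram law.\<close>
lemma nested_midpoint_convex_converges:
  assumes C_H: "\<And>m. C m \<subseteq> H" and C_ne: "\<And>m. C m \<noteq> {}"
    and C_antimono: "\<And>m l. m \<le> l \<Longrightarrow> C l \<subseteq> C m"
    and C_midpoint: "\<And>m f g. f \<in> C m \<Longrightarrow> g \<in> C m \<Longrightarrow> (\<lambda>x. (1/2) * f x + (1/2) * g x) \<in> C m"
    and C_bounded: "\<And>m f. f \<in> C m \<Longrightarrow> ip f f \<le> B"
  obtains s g where "\<And>m. s m \<in> C m" "g \<in> H" "(\<lambda>m. hnorm ip (\<lambda>x. s m x - g x)) \<longlonglongrightarrow> 0"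
proof -
  define d where "d m = Inf ((\<lambda>f. ip f f) ` C m)" for m
  have bdd: "bdd_below ((\<lambda>f. ip f f) ` C m)" for m
    using C_H ip_self_nonneg by (intro bdd_belowI[of _ 0]) auto
  have d_le: "d m \<le> ip f f" if "f \<in> C m" for f m
    unfolding d_def using bdd that by (intro cInf_lower) auto
  have d_le_B: "d m \<le> B" for m
  proof -
    obtain f where "f \<in> C m" using C_ne by blast
    then show ?thesis using d_le[of f m] C_bounded[of f m] by linarith
  qed
  have "incseq d"
    unfolding incseq_def d_def using C_ne bdd C_antimono
    by (intro allI impI cInf_superset_mono image_mono) auto
  then obtain D where d_lim: "d \<longlonglongrightarrow> D" and d_le_D: "\<And>m. d m \<le> D"
    using d_le_B incseq_convergent by blast
  define \<epsilon> where "\<epsilon> m = 1 / (real m + 1)" for m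
  have "\<epsilon> \<longlonglongrightarrow> 0"
    unfolding \<epsilon>_def using LIMSEQ_Suc[OF lim_const_over_n[of 1]] by (simp add: add.commute)
  have "\<forall>m. \<exists>f. f \<in> C m \<and> ip f f < d m + \<epsilon> m"
  proof
    fix m
    have "d m < d m + \<epsilon> m" by (simp add: \<epsilon>_def)
    then show "\<exists>f. f \<in> C m \<and> ip f f < d m + \<epsilon> m"
      using cInf_lessD[of "(\<lambda>f. ip f f) ` C m"] C_ne unfolding d_def by blast
  qed
  then obtain s where "\<forall>m. s m \<in> C m \<and> ip (s m) (s m) < d m + \<epsilon> m"
    by (rule choice[THEN exE])
  then have s_C: "\<And>m. s m \<in> C m" and s_small: "\<And>m. ip (s m) (s m) < d m + \<epsilon> m"
    by auto
  have s_H: "s m \<in> H" for m using C_H s_C by blast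
  have "ip (\<lambda>x. s m x - s l x) (\<lambda>x. s m x - s l x) \<le> 2 * (D - d m) + 4 * \<epsilon> m"
    if "m \<le> l" for m l
  proof -
    define mid where "mid = (\<lambda>x. (1/2) * s m x + (1/2) * s l x)"
    have "mid \<in> C m"
      unfolding mid_def using s_C C_antimono[OF that] by (intro C_midpoint) auto
    then have "d m \<le> ip mid mid" by (rule d_le)
    moreover have "\<epsilon> l \<le> \<epsilon> m"
      using that unfolding \<epsilon>_def by (simp add: frac_le)
    moreover have "ip (\<lambda>x. s m x - s l x) (\<lambda>x. s m x - s l x) = 2 * ip (s m) (s m) + 2 * ip (s l) (s l) - 4 * ip mid mid"
      unfolding mid_def by (rule ip_parallelogram[OF s_H s_H])
    ultimately show ?thesis
      using s_small[of m] s_small[of l] d_le_D[of l] by argo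
  qed
  moreover have "(\<lambda>m. 2 * (D - d m) + 4 * \<epsilon> m) \<longlonglongrightarrow> 2 * (D - D) + 4 * 0"
    by (intro tendsto_intros d_lim \<open>\<epsilon> \<longlonglongrightarrow> 0\<close>)
  ultimately have "\<forall>e>0. \<exists>N. \<forall>m\<ge>N. \<forall>l\<ge>N. hnorm ip (\<lambda>x. s m x - s l x) < e"
    using H_Cauchy_if_sq_dist_le[of s "\<lambda>m. 2 * (D - d m) + 4 * \<epsilon> m", OF s_H] by simp
  then have "\<exists>g\<in>H. (\<lambda>m. hnorm ip (\<lambda>x. s m x - g x)) \<longlonglongrightarrow> 0"
    by (rule H_Cauchy_convergent[OF s_H])
  then obtain g where "g \<in> H" "(\<lambda>m. hnorm ip (\<lambda>x. s m x - g x)) \<longlonglongrightarrow> 0" ..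
  with s_C show thesis by (rule that)
qed

lemma hnorm_limit_le:
  assumes "\<And>m. s m \<in> H" "g \<in> H" "(\<lambda>m. hnorm ip (\<lambda>x. s m x - g x)) \<longlonglongrightarrow> 0"
    and "\<And>m. hnorm ip (s m) \<le> B"
  shows "hnorm ip g \<le> B"
proof -
  have "hnorm ip g \<le> B + hnorm ip (\<lambda>x. s m x - g x)" for m
    using hnorm_lincomb_le[OF assms(1)[of m] diff_in_H[OF assms(1)[of m] assms(2)], of 1 "-1"] assms(4)[of m]
    by simp
  moreover have "(\<lambda>m. B + hnorm ip (\<lambda>x. s m x - g x)) \<longlonglongrightarrow> B + 0"
    by (intro tendsto_intros assms(3))
  ultimately show ?thesis
    using LIMSEQ_le_const by fastforce
qed

text \<open>A substitute for weak compactness of balls: the limit is obtained from the tail sets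
  below, which are convex because they are defined by pointwise bounds.\<close>
lemma bounded_pointwise_limit_in_H:
  assumes \<phi>_H: "\<And>j. \<phi> j \<in> H" and \<phi>_bounded: "\<And>j. hnorm ip (\<phi> j) \<le> B"
    and \<phi>_lim: "\<And>y. y \<in> G \<Longrightarrow> (\<lambda>j. \<phi> j y) \<longlonglongrightarrow> u y"
  obtains g where "g \<in> H" "hnorm ip g \<le> B" "\<And>y. y \<in> G \<Longrightarrow> g y = u y"
proof -
  define C where "C m = {f \<in> H. hnorm ip f \<le> B \<and>
      (\<forall>y\<in>G. \<forall>e. (\<forall>j\<ge>m. \<bar>\<phi> j y - u y\<bar> \<le> e) \<longrightarrow> \<bar>f y - u y\<bar> \<le> e)}" for m
  have C_H: "C m \<subseteq> H" for m
    unfolding C_def by blast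
  have C_midpoint: "(\<lambda>x. (1/2) * f x + (1/2) * g x) \<in> C m" if "f \<in> C m" "g \<in> C m" for f g m
  proof -
    have "hnorm ip (\<lambda>x. (1/2) * f x + (1/2) * g x) \<le> B"
      using hnorm_lincomb_le[of f g "1/2" "1/2"] that unfolding C_def by auto
    moreover have "\<bar>(1/2) * f y + (1/2) * g y - u y\<bar> \<le> e"
      if "\<bar>f y - u y\<bar> \<le> e" "\<bar>g y - u y\<bar> \<le> e" for y e
      using that by linarith
    moreover have "(\<lambda>x. (1/2) * f x + (1/2) * g x) \<in> H"
      using that C_H lincomb_in_H by blast
    ultimately show ?thesis using that unfolding C_def by simp
  qed
  have \<phi>_C: "\<phi> m \<in> C m" for m
    unfolding C_def using \<phi>_H \<phi>_bounded by auto
  have C_antimono: "C l \<subseteq> C m" if "m \<le> l" for m l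
    unfolding C_def using that by auto
  have C_bounded: "ip f f \<le> B\<^sup>2" if "f \<in> C m" for f m
  proof -
    have "hnorm ip f \<le> B" "f \<in> H" using that unfolding C_def by auto
    then show ?thesis using hnorm_nonneg by (auto simp flip: hnorm_sq intro: power_mono)
  qed
  obtain s g where s_C: "\<And>m. s m \<in> C m" and g: "g \<in> H"
    and s_lim: "(\<lambda>m. hnorm ip (\<lambda>x. s m x - g x)) \<longlonglongrightarrow> 0"
  proof (rule nested_midpoint_convex_converges[of C "B\<^sup>2"])
    show "C m \<subseteq> H" for m by (fact C_H)
    show "C m \<noteq> {}" for m using \<phi>_C by blast
    show "C l \<subseteq> C m" if "m \<le> l" for m l using that by (fact C_antimono)
    show "(\<lambda>x. (1/2) * f x + (1/2) * g x) \<in> C m" if "f \<in> C m" "g \<in> C m" for m f g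
      using that by (fact C_midpoint)
    show "ip f f \<le> B\<^sup>2" if "f \<in> C m" for m f using that by (fact C_bounded)
  qed (rule that)
  have s_H: "s m \<in> H" for m using s_C unfolding C_def by blast
  show thesis
  proof (rule that[OF g])
    show "hnorm ip g \<le> B"
      using hnorm_limit_le[OF s_H g s_lim] s_C unfolding C_def by blast
    fix y assume y: "y \<in> G"
    have "(\<lambda>m. s m y) \<longlonglongrightarrow> u y"
    proof (rule LIMSEQ_I)
      fix e :: real assume "e > 0"
      then have "e / 2 > 0" by simp
      then obtain N where N: "\<And>j. j \<ge> N \<Longrightarrow> \<bar>\<phi> j y - u y\<bar> < e / 2"
        using \<phi>_lim[OF y] unfolding LIMSEQ_def dist_real_def by blast
      have "\<bar>s m y - u y\<bar> \<le> e / 2" if "m \<ge> N" for m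
      proof -
        have "\<forall>j\<ge>m. \<bar>\<phi> j y - u y\<bar> \<le> e / 2"
          using N that by (meson le_trans less_imp_le)
        then show ?thesis using s_C[of m] y unfolding C_def by blast
      qed
      then show "\<exists>N. \<forall>m\<ge>N. norm (s m y - u y) < e"
        using \<open>e > 0\<close> by force
    qed
    then show "g y = u y"
      using LIMSEQ_unique H_convergence_imp_pointwise[OF s_H g s_lim] by blast
  qed
qed

end

locale koopman_rkhs = rkhs_space X k H ip
  for X :: "'a::topological_space set" and k H ip +
  fixes \<mu> :: "'a measure" and R :: "'a \<Rightarrow> 'a measure"
  assumes prob: "prob_space \<mu>" and space_eq: "space \<mu> = X"
    and sets_eq: "sets \<mu> = sets (restrict_space borel X)"
    and R_kernel: "R \<in> \<mu> \<rightarrow>\<^sub>M prob_algebra \<mu>" and R_invariant: "bind \<mu> R = \<mu>"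
    and k_continuous: "continuous_on (X \<times> X) (\<lambda>(x, y). k x y)"
    and A1: "(\<lambda>x. k x x) \<in> L2 \<mu>"
    and A2: "\<And>\<psi>. \<psi> \<in> L2 \<mu> \<Longrightarrow> (\<integral>x. (\<integral>y. k x y * \<psi> x * \<psi> y \<partial>\<mu>) \<partial>\<mu>) = 0 \<Longrightarrow> (AE x in \<mu>. \<psi> x = 0)"
    and A3: "\<And>\<psi>. \<psi> \<in> H \<Longrightarrow> (AE x in \<mu>. \<psi> x = 0) \<Longrightarrow> \<psi> = (\<lambda>x. 0)"
begin

lemma H_continuous:
  assumes f: "f \<in> H"
  shows "continuous_on X f"
  unfolding continuous_on_def
proof
  fix x assume x: "x \<in> X"
  define q where "q y = k y y - 2 * k x y + k x x" for y
  have "continuous_on X (\<lambda>y. (\<lambda>(x, y). k x y) (y, y))"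
    by (rule continuous_on_compose2[OF k_continuous]) (auto intro: continuous_intros)
  moreover have "continuous_on X (\<lambda>y. (\<lambda>(x, y). k x y) (x, y))"
    by (rule continuous_on_compose2[OF k_continuous]) (use x in \<open>auto intro: continuous_intros\<close>)
  ultimately have "continuous_on X q"
    unfolding q_def by (intro continuous_on_add continuous_on_diff continuous_on_mult continuous_on_const) simp_all
  then have "(q \<longlongrightarrow> q x) (at x within X)"
    using x unfolding continuous_on_def by blast
  then have "((\<lambda>y. sqrt (q y)) \<longlongrightarrow> 0) (at x within X)"
    using tendsto_real_sqrt by (force simp: q_def)
  then have lim: "((\<lambda>y. hnorm ip f * sqrt (q y)) \<longlongrightarrow> 0) (at x within X)"
    by (rule tendsto_mult_right_zero)
  moreover have "norm (f y - f x) \<le> hnorm ip f * sqrt (q y)" if y: "y \<in> X" for y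
  proof -
    have fd: "(\<lambda>z. feat X k y z - feat X k x z) \<in> H"
      using diff_in_H feat_in_H x y by blast
    have "f y - f x = ip f (\<lambda>z. feat X k y z - feat X k x z)"
      using ip_diff_right[OF feat_in_H[OF y] feat_in_H[OF x] f] ip_feat[OF x f] ip_feat[OF y f] by simp
    then have "norm (f y - f x) \<le> hnorm ip f * hnorm ip (\<lambda>z. feat X k y z - feat X k x z)"
      using abs_ip_le_hnorm[OF f fd] by simp
    also have "hnorm ip (\<lambda>z. feat X k y z - feat X k x z) = sqrt (q y)"
      using hnorm_feat_diff_sq[OF x y] hnorm_nonneg[OF fd] unfolding q_def by (metis real_sqrt_unique)
    finally show ?thesis .
  qed
  then have "eventually (\<lambda>y. norm (f y - f x) \<le> hnorm ip f * sqrt (q y)) (at x within X)"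
    by (auto simp: eventually_at_filter)
  from Lim_null_comparison[OF this lim] have "((\<lambda>y. f y - f x) \<longlongrightarrow> 0) (at x within X)" .
  then show "(f \<longlongrightarrow> f x) (at x within X)" by (simp add: LIM_zero_iff)
qed

lemma H_measurable: "f \<in> H \<Longrightarrow> f \<in> borel_measurable \<mu>"
  using borel_measurable_continuous_on_restrict[OF H_continuous] measurable_cong_sets[OF sets_eq refl]
  by blast

lemma R_subprob: "R \<in> \<mu> \<rightarrow>\<^sub>M subprob_algebra \<mu>"
  by (rule measurable_prob_algebraD[OF R_kernel])

lemma
  assumes "y \<in> X"
  shows prob_space_R: "prob_space (R y)" and sets_R: "sets (R y) = sets \<mu>" and space_R: "space (R y) = X"
proof -
  have "R y \<in> space (prob_algebra \<mu>)" using measurable_space[OF R_kernel] assms space_eq by blast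
  then show "prob_space (R y)" and sets: "sets (R y) = sets \<mu>" by (auto simp: space_prob_algebra)
  show "space (R y) = X" using sets_eq_imp_space_eq[OF sets] space_eq by simp
qed

lemma measurable_R: "f \<in> borel_measurable \<mu> \<Longrightarrow> y \<in> X \<Longrightarrow> f \<in> borel_measurable (R y)"
  using measurable_cong_sets[OF sets_R refl] by blast

lemma k_diag_measurable: "(\<lambda>x. k x x) \<in> borel_measurable \<mu>"
  using A1 by (simp add: L2_def)

lemma k_diag_integrable: "integrable \<mu> (\<lambda>x. k x x)"
  using A1 prob_space.axioms(1)[OF prob] finite_measure.square_integrable_imp_integrable[OF _ k_diag_measurable]
  by (simp add: L2_def)

lemma nn_integral_R_k_diag:
  "(\<integral>\<^sup>+ y. (\<integral>\<^sup>+ z. ennreal (k z z) \<partial>R y) \<partial>\<mu>) = ennreal (\<integral> z. k z z \<partial>\<mu>)"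
proof -
  have "(\<integral>\<^sup>+ y. (\<integral>\<^sup>+ z. ennreal (k z z) \<partial>R y) \<partial>\<mu>) = (\<integral>\<^sup>+ z. ennreal (k z z) \<partial>bind \<mu> R)"
    using k_diag_measurable by (intro nn_integral_bind[OF _ R_subprob, symmetric]) measurable
  also have "\<dots> = ennreal (\<integral> z. k z z \<partial>\<mu>)"
    unfolding R_invariant
    by (rule nn_integral_eq_integral[OF k_diag_integrable]) (intro AE_I2, simp add: space_eq k_diag_nonneg)
  finally show ?thesis .
qed

definition R_regular :: "'a set" where
  "R_regular = {y \<in> X. integrable (R y) (\<lambda>z. k z z)}"

definition R_k_diag :: "'a \<Rightarrow> real" where
  "R_k_diag y = (\<integral> z. k z z \<partial>R y)"

lemma nn_integral_R_k_diag_regular: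
  "y \<in> R_regular \<Longrightarrow> (\<integral>\<^sup>+ z. ennreal (k z z) \<partial>R y) = ennreal (R_k_diag y)"
  unfolding R_regular_def R_k_diag_def
  by (intro nn_integral_eq_integral AE_I2) (auto simp: space_R k_diag_nonneg)

lemma AE_R_regular: "AE y in \<mu>. y \<in> R_regular"
proof -
  have "(\<lambda>y. \<integral>\<^sup>+ z. ennreal (k z z) \<partial>R y) \<in> borel_measurable \<mu>"
    using k_diag_measurable
    by (intro measurable_compose[OF R_subprob nn_integral_measurable_subprob_algebra]) measurable
  then have "AE y in \<mu>. (\<integral>\<^sup>+ z. ennreal (k z z) \<partial>R y) \<noteq> \<infinity>"
    by (rule nn_integral_PInf_AE) (simp add: nn_integral_R_k_diag)
  then show ?thesis
  proof (rule AE_mp, intro AE_I2 impI)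
    fix y assume "y \<in> space \<mu>" and finite: "(\<integral>\<^sup>+ z. ennreal (k z z) \<partial>R y) \<noteq> \<infinity>"
    then have y: "y \<in> X" using space_eq by simp
    have "(\<integral>\<^sup>+ z. ennreal (norm (k z z)) \<partial>R y) = (\<integral>\<^sup>+ z. ennreal (k z z) \<partial>R y)"
      by (intro nn_integral_cong) (simp add: space_R[OF y] k_diag_nonneg)
    then have "integrable (R y) (\<lambda>z. k z z)"
      using finite measurable_R[OF k_diag_measurable y] by (intro integrableI_bounded) (auto simp: less_top)
    then show "y \<in> R_regular" using y by (simp add: R_regular_def)
  qed
qed

lemma R_k_diag_nonneg: "y \<in> X \<Longrightarrow> 0 \<le> R_k_diag y"
  unfolding R_k_diag_def by (intro integral_nonneg_AE AE_I2) (simp add: space_R k_diag_nonneg)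

lemma R_k_diag_integrable: "integrable \<mu> R_k_diag"
proof (rule integrableI_bounded)
  show "R_k_diag \<in> borel_measurable \<mu>"
    unfolding R_k_diag_def
    by (rule measurable_compose[OF R_subprob integral_measurable_subprob_algebra[OF k_diag_measurable]])
  have "(\<integral>\<^sup>+ y. ennreal (norm (R_k_diag y)) \<partial>\<mu>) = (\<integral>\<^sup>+ y. (\<integral>\<^sup>+ z. ennreal (k z z) \<partial>R y) \<partial>\<mu>)"
    using AE_R_regular
    by (intro nn_integral_cong_AE, eventually_elim)
      (simp add: nn_integral_R_k_diag_regular R_k_diag_nonneg R_regular_def)
  then show "(\<integral>\<^sup>+ y. ennreal (norm (R_k_diag y)) \<partial>\<mu>) < \<infinity>"
    by (simp add: nn_integral_R_k_diag)
qed

lemma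
  assumes f: "f \<in> H" and y: "y \<in> R_regular"
  shows integrable_R_H: "integrable (R y) f"
    and koopman_sq_le: "(koopman R f y)\<^sup>2 \<le> (hnorm ip f)\<^sup>2 * R_k_diag y"
proof -
  have yX: "y \<in> X" and k_int: "integrable (R y) (\<lambda>z. k z z)"
    using y by (auto simp: R_regular_def)
  interpret R_y: prob_space "R y" by (rule prob_space_R[OF yX])
  have f_meas: "f \<in> borel_measurable (R y)" by (rule measurable_R[OF H_measurable[OF f] yX])
  have f_sq_le: "(f z)\<^sup>2 \<le> (hnorm ip f)\<^sup>2 * k z z" if "z \<in> space (R y)" for z
    using sq_le_hnorm_sq_diag[OF f] that space_R[OF yX] by simp
  have f_sq_int: "integrable (R y) (\<lambda>z. (f z)\<^sup>2)"
  proof (rule Bochner_Integration.integrable_bound)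
    show "integrable (R y) (\<lambda>z. (hnorm ip f)\<^sup>2 * k z z)" using k_int by simp
    show "AE z in R y. norm ((f z)\<^sup>2) \<le> norm ((hnorm ip f)\<^sup>2 * k z z)"
      using f_sq_le space_R[OF yX] by (intro AE_I2) (auto simp: k_diag_nonneg)
  qed (use f_meas in measurable)
  show f_int: "integrable (R y) f"
    by (rule R_y.square_integrable_imp_integrable[OF f_meas f_sq_int])
  have "0 \<le> R_y.variance f" by (intro integral_nonneg_AE AE_I2) simp
  then have "(koopman R f y)\<^sup>2 \<le> (\<integral> z. (f z)\<^sup>2 \<partial>R y)"
    using R_y.variance_eq[OF f_int f_sq_int] unfolding koopman_def by simp
  also have "\<dots> \<le> (\<integral> z. (hnorm ip f)\<^sup>2 * k z z \<partial>R y)"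
    using f_sq_int k_int f_sq_le by (intro integral_mono) auto
  also have "\<dots> = (hnorm ip f)\<^sup>2 * R_k_diag y" unfolding R_k_diag_def by simp
  finally show "(koopman R f y)\<^sup>2 \<le> (hnorm ip f)\<^sup>2 * R_k_diag y" .
qed

lemma abs_koopman_le:
  assumes "f \<in> H" "y \<in> R_regular"
  shows "\<bar>koopman R f y\<bar> \<le> hnorm ip f * sqrt (R_k_diag y)"
proof -
  have "\<bar>koopman R f y\<bar>\<^sup>2 \<le> (hnorm ip f)\<^sup>2 * R_k_diag y"
    using koopman_sq_le[OF assms] by simp
  then have "\<bar>koopman R f y\<bar> \<le> sqrt ((hnorm ip f)\<^sup>2 * R_k_diag y)"
    by (rule real_le_rsqrt)
  also have "\<dots> = hnorm ip f * sqrt (R_k_diag y)"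
    using hnorm_nonneg[OF assms(1)] by (simp add: real_sqrt_mult)
  finally show ?thesis .
qed

lemma koopman_measurable: "f \<in> H \<Longrightarrow> koopman R f \<in> borel_measurable \<mu>"
  unfolding koopman_def
  by (rule measurable_compose[OF R_subprob integral_measurable_subprob_algebra[OF H_measurable]])

lemma koopman_lincomb:
  "y \<in> R_regular \<Longrightarrow> f \<in> H \<Longrightarrow> g \<in> H \<Longrightarrow>
    koopman R (\<lambda>x. a * f x + b * g x) y = a * koopman R f y + b * koopman R g y"
  unfolding koopman_def using integrable_R_H by simp

lemma koopman_pointwise_convergent:
  assumes "\<And>m. \<sigma> m \<in> H" "l \<in> H" "(\<lambda>m. hnorm ip (\<lambda>x. \<sigma> m x - l x)) \<longlonglongrightarrow> 0" "y \<in> R_regular"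
  shows "(\<lambda>m. koopman R (\<sigma> m) y) \<longlonglongrightarrow> koopman R l y"
proof -
  have "koopman R (\<sigma> m) y - koopman R l y = koopman R (\<lambda>x. \<sigma> m x - l x) y" for m
    using koopman_lincomb[OF assms(4) assms(1) assms(2), where a = 1 and b = "-1"] by simp
  then have "norm (koopman R (\<sigma> m) y - koopman R l y) \<le> hnorm ip (\<lambda>x. \<sigma> m x - l x) * sqrt (R_k_diag y)"
    for m
    using abs_koopman_le[OF diff_in_H[OF assms(1,2)] assms(4)] by simp
  from Lim_null_comparison[OF always_eventually[OF allI[OF this]] tendsto_mult_left_zero[OF assms(3)]]
  show ?thesis by (simp add: LIM_zero_iff)
qed

lemma L2_diff:
  assumes u: "u \<in> L2 \<mu>" and v: "v \<in> L2 \<mu>"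
  shows "(\<lambda>x. u x - v x) \<in> L2 \<mu>"
proof -
  have meas: "u \<in> borel_measurable \<mu>" "v \<in> borel_measurable \<mu>" using u v by (auto simp: L2_def)
  have "integrable \<mu> (\<lambda>z. (u z - v z)\<^sup>2)"
  proof (rule Bochner_Integration.integrable_bound)
    show "integrable \<mu> (\<lambda>z. 2 * (u z)\<^sup>2 + 2 * (v z)\<^sup>2)" using u v by (auto simp: L2_def)
    have "(a - b)\<^sup>2 \<le> 2 * a\<^sup>2 + 2 * b\<^sup>2" for a b :: real
      using sum_squares_ge_zero[of "a + b" 0] by (simp add: power2_eq_square algebra_simps)
    then show "AE z in \<mu>. norm ((u z - v z)\<^sup>2) \<le> norm (2 * (u z)\<^sup>2 + 2 * (v z)\<^sup>2)"
      by (intro AE_I2) simp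
  qed (use meas in measurable)
  then show ?thesis using meas by (simp add: L2_def)
qed

lemma H_in_L2:
  assumes f: "f \<in> H"
  shows "f \<in> L2 \<mu>"
proof -
  have "integrable \<mu> (\<lambda>z. (f z)\<^sup>2)"
  proof (rule Bochner_Integration.integrable_bound)
    show "integrable \<mu> (\<lambda>z. (hnorm ip f)\<^sup>2 * k z z)" using k_diag_integrable by simp
    show "AE z in \<mu>. norm ((f z)\<^sup>2) \<le> norm ((hnorm ip f)\<^sup>2 * k z z)"
      using sq_le_hnorm_sq_diag[OF f] by (intro AE_I2) (auto simp: space_eq k_diag_nonneg)
  qed (use H_measurable[OF f] in measurable)
  then show ?thesis using H_measurable[OF f] by (simp add: L2_def)
qed

lemma koopman_in_L2:
  assumes f: "f \<in> H"
  shows "koopman R f \<in> L2 \<mu>"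
proof -
  have "integrable \<mu> (\<lambda>z. (koopman R f z)\<^sup>2)"
  proof (rule Bochner_Integration.integrable_bound)
    show "integrable \<mu> (\<lambda>z. (hnorm ip f)\<^sup>2 * R_k_diag z)" using R_k_diag_integrable by simp
    show "AE z in \<mu>. norm ((koopman R f z)\<^sup>2) \<le> norm ((hnorm ip f)\<^sup>2 * R_k_diag z)"
      using AE_R_regular
    proof eventually_elim
      case (elim z)
      then show ?case using koopman_sq_le[OF f elim] R_k_diag_nonneg[of z] by (simp add: R_regular_def)
    qed
  qed (use koopman_measurable[OF f] in measurable)
  then show ?thesis using koopman_measurable[OF f] by (simp add: L2_def)
qed

lemma k_col_measurable:
  assumes x: "x \<in> X"
  shows "(\<lambda>y. k y x) \<in> borel_measurable \<mu>"
proof -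
  have "feat X k x \<in> borel_measurable \<mu>" by (rule H_measurable[OF feat_in_H[OF x]])
  then show ?thesis
    by (rule measurable_cong[THEN iffD1, rotated]) (simp add: feat_def space_eq k_commute[OF x])
qed

lemma integrable_L2_k:
  assumes u: "u \<in> L2 \<mu>" and x: "x \<in> X"
  shows "integrable \<mu> (\<lambda>y. u y * k y x)"
proof (rule Bochner_Integration.integrable_bound)
  show "integrable \<mu> (\<lambda>y. sqrt (k x x) * ((u y)\<^sup>2 + k y y))"
    using u k_diag_integrable by (auto simp: L2_def)
  show "AE y in \<mu>. norm (u y * k y x) \<le> norm (sqrt (k x x) * ((u y)\<^sup>2 + k y y))"
  proof (intro AE_I2)
    fix y assume "y \<in> space \<mu>"
    then have y: "y \<in> X" using space_eq by simp
    have "2 * (\<bar>u y\<bar> * sqrt (k y y)) \<le> (u y)\<^sup>2 + k y y"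
      using sum_squares_ge_zero[of "\<bar>u y\<bar> - sqrt (k y y)" 0] k_diag_nonneg[OF y]
      by (simp add: power2_eq_square algebra_simps)
    moreover have "0 \<le> \<bar>u y\<bar> * sqrt (k y y)" using k_diag_nonneg[OF y] by simp
    ultimately have "\<bar>u y\<bar> * sqrt (k y y) \<le> (u y)\<^sup>2 + k y y" by linarith
    have "norm (u y * k y x) = \<bar>u y\<bar> * \<bar>k y x\<bar>" by (simp add: abs_mult)
    also have "\<dots> \<le> \<bar>u y\<bar> * (sqrt (k y y) * sqrt (k x x))"
      by (intro mult_left_mono abs_k_le[OF y x]) simp
    also have "\<dots> = sqrt (k x x) * (\<bar>u y\<bar> * sqrt (k y y))" by simp
    also have "\<dots> \<le> sqrt (k x x) * ((u y)\<^sup>2 + k y y)"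
      by (intro mult_left_mono \<open>\<bar>u y\<bar> * sqrt (k y y) \<le> (u y)\<^sup>2 + k y y\<close>) (simp add: k_diag_nonneg[OF x])
    also have "\<dots> \<le> norm (sqrt (k x x) * ((u y)\<^sup>2 + k y y))" by simp
    finally show "norm (u y * k y x) \<le> norm (sqrt (k x x) * ((u y)\<^sup>2 + k y y))" .
  qed
qed (use u k_col_measurable[OF x] in \<open>auto simp: L2_def\<close>)

lemma Eop_diff:
  assumes "u \<in> L2 \<mu>" "v \<in> L2 \<mu>"
  shows "Eop \<mu> k (\<lambda>y. u y - v y) x = Eop \<mu> k u x - Eop \<mu> k v x"
proof (cases "x \<in> X")
  case True
  have "(\<integral>y. (u y - v y) * k y x \<partial>\<mu>) = (\<integral>y. u y * k y x - v y * k y x \<partial>\<mu>)"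
    by (simp add: left_diff_distrib)
  also have "\<dots> = (\<integral>y. u y * k y x \<partial>\<mu>) - (\<integral>y. v y * k y x \<partial>\<mu>)"
    by (rule Bochner_Integration.integral_diff[OF integrable_L2_k[OF assms(1) True] integrable_L2_k[OF assms(2) True]])
  finally show ?thesis unfolding Eop_def using True space_eq by simp
qed (simp add: Eop_def space_eq)

lemma Eop_cong_AE:
  assumes "u \<in> borel_measurable \<mu>" "v \<in> borel_measurable \<mu>" "AE y in \<mu>. u y = v y"
  shows "Eop \<mu> k u = Eop \<mu> k v"
proof
  fix x show "Eop \<mu> k u x = Eop \<mu> k v x"
  proof (cases "x \<in> X")
    case True
    have "(\<integral>y. u y * k y x \<partial>\<mu>) = (\<integral>y. v y * k y x \<partial>\<mu>)"
      using assms k_col_measurable[OF True] by (intro integral_cong_AE) auto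
    then show ?thesis unfolding Eop_def by simp
  qed (simp add: Eop_def space_eq)
qed

text \<open>(A2) is injectivity of E on L^2(\<mu>): its double integral is the integral of u \<cdot> E u.\<close>
lemma AE_zero_if_Eop_zero:
  assumes u: "u \<in> L2 \<mu>" and Eu: "\<And>x. x \<in> X \<Longrightarrow> Eop \<mu> k u x = 0"
  shows "AE y in \<mu>. u y = 0"
proof (rule A2[OF u])
  have "(\<integral>y. k x y * u x * u y \<partial>\<mu>) = 0" if x: "x \<in> space \<mu>" for x
  proof -
    have "(\<integral>y. k x y * u x * u y \<partial>\<mu>) = (\<integral>y. u x * (u y * k y x) \<partial>\<mu>)"
      using x by (intro Bochner_Integration.integral_cong) (simp_all add: space_eq k_commute)
    also have "\<dots> = u x * Eop \<mu> k u x" using x by (simp add: Eop_def)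
    finally show ?thesis using Eu x space_eq by simp
  qed
  then show "(\<integral>x. (\<integral>y. k x y * u x * u y \<partial>\<mu>) \<partial>\<mu>) = 0"
    by (simp cong: Bochner_Integration.integral_cong)
qed

lemma CH_eq_CHt_iff:
  assumes \<psi>: "\<psi> \<in> H" and \<phi>: "\<phi> \<in> H"
  shows "CH \<mu> k \<phi> = CHt \<mu> k R \<psi> \<longleftrightarrow> (AE y in \<mu>. koopman R \<psi> y = \<phi> y)"
proof
  assume "AE y in \<mu>. koopman R \<psi> y = \<phi> y"
  then show "CH \<mu> k \<phi> = CHt \<mu> k R \<psi>"
    unfolding CH_def CHt_def
    by (intro Eop_cong_AE H_measurable[OF \<phi>] koopman_measurable[OF \<psi>]) (auto elim: AE_mp)
next
  assume "CH \<mu> k \<phi> = CHt \<mu> k R \<psi>"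
  then have "Eop \<mu> k (\<lambda>y. \<phi> y - koopman R \<psi> y) x = 0" for x
    unfolding Eop_diff[OF H_in_L2[OF \<phi>] koopman_in_L2[OF \<psi>]] CH_def CHt_def by simp
  with AE_zero_if_Eop_zero[OF L2_diff[OF H_in_L2[OF \<phi>] koopman_in_L2[OF \<psi>]]]
  show "AE y in \<mu>. koopman R \<psi> y = \<phi> y" by (auto elim: AE_mp)
qed

lemma H_eq_if_AE_eq:
  assumes "\<phi>\<^sub>1 \<in> H" "\<phi>\<^sub>2 \<in> H" "AE y in \<mu>. g y = \<phi>\<^sub>1 y" "AE y in \<mu>. g y = \<phi>\<^sub>2 y"
  shows "\<phi>\<^sub>1 = \<phi>\<^sub>2"
proof -
  have "AE y in \<mu>. \<phi>\<^sub>1 y - \<phi>\<^sub>2 y = 0" using assms(3,4) by eventually_elim simp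
  then have "(\<lambda>x. \<phi>\<^sub>1 x - \<phi>\<^sub>2 x) = (\<lambda>x. 0)" using A3[OF diff_in_H[OF assms(1,2)]] by simp
  then show ?thesis by (simp add: fun_eq_iff)
qed

lemma CHt_in_range_CH_iff:
  assumes \<psi>: "\<psi> \<in> H"
  shows "CHt \<mu> k R \<psi> \<in> CH \<mu> k ` H \<longleftrightarrow> (\<exists>\<phi>\<in>H. AE x in \<mu>. koopman R \<psi> x = \<phi> x)"
proof
  assume "CHt \<mu> k R \<psi> \<in> CH \<mu> k ` H"
  then obtain \<phi> where "\<phi> \<in> H" "CH \<mu> k \<phi> = CHt \<mu> k R \<psi>" by force
  then show "\<exists>\<phi>\<in>H. AE x in \<mu>. koopman R \<psi> x = \<phi> x" using CH_eq_CHt_iff[OF \<psi>] by blast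
next
  assume "\<exists>\<phi>\<in>H. AE x in \<mu>. koopman R \<psi> x = \<phi> x"
  then obtain \<phi> where "\<phi> \<in> H" "CH \<mu> k \<phi> = CHt \<mu> k R \<psi>" using CH_eq_CHt_iff[OF \<psi>] by blast
  then show "CHt \<mu> k R \<psi> \<in> CH \<mu> k ` H" by (metis image_eqI)
qed

lemma koopman_maps_H_iff_range_subset:
  "(\<forall>\<psi>\<in>H. \<exists>\<phi>\<in>H. AE x in \<mu>. koopman R \<psi> x = \<phi> x) \<longleftrightarrow> CHt \<mu> k R ` H \<subseteq> CH \<mu> k ` H"
  using CHt_in_range_CH_iff by (simp add: image_subset_iff)

context
  assumes range_subset: "CHt \<mu> k R ` H \<subseteq> CH \<mu> k ` H"
begin

lemma KH_in_H_AE_koopman: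
  assumes \<psi>: "\<psi> \<in> H"
  shows "KH \<mu> k H R \<psi> \<in> H" "AE y in \<mu>. koopman R \<psi> y = KH \<mu> k H R \<psi> y"
proof -
  have "CHt \<mu> k R \<psi> \<in> CH \<mu> k ` H" using range_subset \<psi> by blast
  then obtain \<phi> where \<phi>: "\<phi> \<in> H" "AE y in \<mu>. koopman R \<psi> y = \<phi> y"
    using CHt_in_range_CH_iff[OF \<psi>] by blast
  have "\<exists>!\<phi>. \<phi> \<in> H \<and> CH \<mu> k \<phi> = CHt \<mu> k R \<psi>"
  proof (rule ex1I[of _ \<phi>])
    show "\<phi> \<in> H \<and> CH \<mu> k \<phi> = CHt \<mu> k R \<psi>" using \<phi> CH_eq_CHt_iff[OF \<psi>] by blast
    fix \<phi>' assume "\<phi>' \<in> H \<and> CH \<mu> k \<phi>' = CHt \<mu> k R \<psi>"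
    then have "\<phi>' \<in> H" "AE y in \<mu>. koopman R \<psi> y = \<phi>' y" using CH_eq_CHt_iff[OF \<psi>] by blast+
    then show "\<phi>' = \<phi>" using H_eq_if_AE_eq[OF _ \<phi>(1) _ \<phi>(2)] by blast
  qed
  then have "KH \<mu> k H R \<psi> \<in> H \<and> CH \<mu> k (KH \<mu> k H R \<psi>) = CHt \<mu> k R \<psi>"
    unfolding KH_def by (rule theI')
  then show "KH \<mu> k H R \<psi> \<in> H" "AE y in \<mu>. koopman R \<psi> y = KH \<mu> k H R \<psi> y"
    using CH_eq_CHt_iff[OF \<psi>] by blast+
qed

lemma KH_lincomb:
  assumes f: "f \<in> H" and g: "g \<in> H"
  shows "KH \<mu> k H R (\<lambda>x. a * f x + b * g x) = (\<lambda>x. a * KH \<mu> k H R f x + b * KH \<mu> k H R g x)"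
proof (rule H_eq_if_AE_eq)
  have fg: "(\<lambda>x. a * f x + b * g x) \<in> H" using f g by (rule lincomb_in_H)
  show "KH \<mu> k H R (\<lambda>x. a * f x + b * g x) \<in> H" by (rule KH_in_H_AE_koopman(1)[OF fg])
  show "(\<lambda>x. a * KH \<mu> k H R f x + b * KH \<mu> k H R g x) \<in> H"
    by (rule lincomb_in_H[OF KH_in_H_AE_koopman(1)[OF f] KH_in_H_AE_koopman(1)[OF g]])
  show "AE y in \<mu>. koopman R (\<lambda>x. a * f x + b * g x) y = KH \<mu> k H R (\<lambda>x. a * f x + b * g x) y"
    by (rule KH_in_H_AE_koopman(2)[OF fg])
  show "AE y in \<mu>. koopman R (\<lambda>x. a * f x + b * g x) y = a * KH \<mu> k H R f y + b * KH \<mu> k H R g y"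
    using AE_R_regular KH_in_H_AE_koopman(2)[OF f] KH_in_H_AE_koopman(2)[OF g]
  proof eventually_elim
    case (elim y)
    then show ?case using koopman_lincomb[OF elim(1) f g] by simp
  qed
qed

lemma KH_sublevel_closed:
  assumes \<sigma>: "\<And>m. \<sigma> m \<in> H" and bounded: "\<And>m. hnorm ip (KH \<mu> k H R (\<sigma> m)) \<le> n"
    and l: "l \<in> H" and lim: "(\<lambda>m. hnorm ip (\<lambda>x. \<sigma> m x - l x)) \<longlonglongrightarrow> 0"
  shows "hnorm ip (KH \<mu> k H R l) \<le> n"
proof -
  define G where "G = {y \<in> R_regular. \<forall>j. koopman R (\<sigma> j) y = KH \<mu> k H R (\<sigma> j) y}"
  have "AE y in \<mu>. \<forall>j. koopman R (\<sigma> j) y = KH \<mu> k H R (\<sigma> j) y"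
    unfolding AE_all_countable using KH_in_H_AE_koopman(2)[OF \<sigma>] by blast
  with AE_R_regular have AE_G: "AE y in \<mu>. y \<in> G"
    unfolding G_def by eventually_elim simp
  have "(\<lambda>j. KH \<mu> k H R (\<sigma> j) y) \<longlonglongrightarrow> koopman R l y" if "y \<in> G" for y
  proof -
    have y: "y \<in> R_regular" and eq: "\<And>j. koopman R (\<sigma> j) y = KH \<mu> k H R (\<sigma> j) y"
      using that unfolding G_def by auto
    show ?thesis using koopman_pointwise_convergent[OF \<sigma> l lim y] by (simp add: eq)
  qed
  from bounded_pointwise_limit_in_H[OF KH_in_H_AE_koopman(1)[OF \<sigma>] bounded this]
  obtain g where g: "g \<in> H" "hnorm ip g \<le> n" "\<And>y. y \<in> G \<Longrightarrow> g y = koopman R l y"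
    by blast
  have "AE y in \<mu>. koopman R l y = g y"
    using AE_G by eventually_elim (simp add: g(3))
  then have "KH \<mu> k H R l = g"
    by (rule H_eq_if_AE_eq[OF KH_in_H_AE_koopman(1)[OF l] g(1) KH_in_H_AE_koopman(2)[OF l]])
  then show ?thesis using g(2) by simp
qed

lemma KH_bounded: "\<exists>B. \<forall>\<psi>\<in>H. hnorm ip (KH \<mu> k H R \<psi>) \<le> B * hnorm ip \<psi>"
proof -
  obtain n \<psi>\<^sub>0 r where ball: "\<psi>\<^sub>0 \<in> H" "r > 0"
    "\<And>\<psi>. \<psi> \<in> H \<Longrightarrow> hnorm ip (\<lambda>x. \<psi>\<^sub>0 x - \<psi> x) < r \<Longrightarrow> hnorm ip (KH \<mu> k H R \<psi>) \<le> n"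
  proof (rule bounded_on_ball_if_closed_sublevels[of "\<lambda>\<psi>. hnorm ip (KH \<mu> k H R \<psi>)"])
    show "hnorm ip (KH \<mu> k H R l) \<le> n"
      if "\<And>m. \<sigma> m \<in> H" "\<And>m. hnorm ip (KH \<mu> k H R (\<sigma> m)) \<le> n" "l \<in> H"
        "(\<lambda>m. hnorm ip (\<lambda>x. \<sigma> m x - l x)) \<longlonglongrightarrow> 0" for n \<sigma> l
      using that by (rule KH_sublevel_closed)
  qed (rule that)
  show ?thesis
    by (rule linear_bounded_if_bounded_on_ball[OF KH_in_H_AE_koopman(1) KH_lincomb ball])
qed

end

lemma KH_bounded_iff_range_subset:
  "(KH_dom \<mu> k H R = H \<and> (\<exists>B. \<forall>\<psi>\<in>H. hnorm ip (KH \<mu> k H R \<psi>) \<le> B * hnorm ip \<psi>))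
    \<longleftrightarrow> CHt \<mu> k R ` H \<subseteq> CH \<mu> k ` H"
proof
  assume "CHt \<mu> k R ` H \<subseteq> CH \<mu> k ` H"
  then show "KH_dom \<mu> k H R = H \<and> (\<exists>B. \<forall>\<psi>\<in>H. hnorm ip (KH \<mu> k H R \<psi>) \<le> B * hnorm ip \<psi>)"
    using KH_bounded unfolding KH_dom_def by blast
qed (auto simp: KH_dom_def)

end

theorem proposition4p4:
  fixes X :: "(real^'d) set"
    and \<mu> :: "(real^'d) measure"
    and \<rho> :: "real \<Rightarrow> real^'d \<Rightarrow> (real^'d) measure"
    and k :: "real^'d \<Rightarrow> real^'d \<Rightarrow> real"
    and H :: "(real^'d \<Rightarrow> real) set"
    and ip :: "(real^'d \<Rightarrow> real) \<Rightarrow> (real^'d \<Rightarrow> real) \<Rightarrow> real"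
    and t :: real
  assumes mu_prob: "prob_space \<mu>"
    and mu_space: "space \<mu> = X"
    and mu_sets: "sets \<mu> = sets (restrict_space borel X)"
    and rho_kernel: "\<And>s. s \<ge> 0 \<Longrightarrow> \<rho> s \<in> \<mu> \<rightarrow>\<^sub>M prob_algebra \<mu>"
    and rho_invariant: "\<And>s. s \<ge> 0 \<Longrightarrow> bind \<mu> (\<rho> s) = \<mu>"
    and k_cont: "continuous_on (X \<times> X) (\<lambda>(x, y). k x y)"
    and k_pd: "pd_kernel X k"
    and rkhs: "is_rkhs X k H ip"
    and A1: "(\<lambda>x. k x x) \<in> L2 \<mu>"
    and A2: "\<And>\<psi>. \<psi> \<in> L2 \<mu> \<Longrightarrow>
               (\<integral>x. (\<integral>y. k x y * \<psi> x * \<psi> y \<partial>\<mu>) \<partial>\<mu>) = 0 \<Longrightarrow> (AE x in \<mu>. \<psi> x = 0)"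
    and A3: "\<And>\<psi>. \<psi> \<in> H \<Longrightarrow> (AE x in \<mu>. \<psi> x = 0) \<Longrightarrow> \<psi> = (\<lambda>x. 0)"
    and t_pos: "t > 0"
  shows "((\<forall>\<psi>\<in>H. \<exists>\<phi>\<in>H. AE x in \<mu>. koopman (\<rho> t) \<psi> x = \<phi> x)
           \<longleftrightarrow> (KH_dom \<mu> k H (\<rho> t) = H \<and>
                (\<exists>B. \<forall>\<psi>\<in>H. hnorm ip (KH \<mu> k H (\<rho> t) \<psi>) \<le> B * hnorm ip \<psi>)))
       \<and> ((KH_dom \<mu> k H (\<rho> t) = H \<and>
                (\<exists>B. \<forall>\<psi>\<in>H. hnorm ip (KH \<mu> k H (\<rho> t) \<psi>) \<le> B * hnorm ip \<psi>))
           \<longleftrightarrow> CHt \<mu> k (\<rho> t) ` H \<subseteq> CH \<mu> k ` H)"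
proof -
  have "koopman_rkhs X k H ip \<mu> (\<rho> t)"
    using rkhs mu_prob mu_space mu_sets rho_kernel[of t] rho_invariant[of t] t_pos k_cont A1 A2 A3
    by (simp add: koopman_rkhs_def koopman_rkhs_axioms_def rkhs_space_def)
  from koopman_rkhs.koopman_maps_H_iff_range_subset[OF this]
    koopman_rkhs.KH_bounded_iff_range_subset[OF this]
  show ?thesis by blast
qed

end
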